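(* Let $E>0$... more precisely let $E\neq 0$ be real and set $\theta=2/E$. Let $H(\mathbf{x})=\frac12(x^2-t^2)$. Then for any (smooth, Schwartz) function $f$ on $\mathbb{R}^2$, $$\mathsf{D}^2 f=E^2\,H\star f\qquad\text{and}\qquad \tilde{\mathsf{D}}^2 f=E^2\, f\star H .$$
   Context: Coordinates on $\mathbb{R}^2$ are $\mathbf{x}=(x^0,x^1)=(t,x)$, Minkowski metric $\eta=\mathrm{diag}(1,-1)$, $\mathbf{k}\cdot\mathbf{x}=\eta_{\mu\nu}k^\mu x^\nu$, and $\epsilon_{\mu\nu}$ antisymmetric with $\epsilon_{01}=1$. With $E_{\mu\nu}=E\epsilon_{\mu\nu}$, $\mathsf{D}_\mu=\frac1{\sqrt2}(-i\partial_\mu+E_{\mu\nu}x^\nu)$, $\tilde{\mathsf{D}}_\mu=\frac1{\sqrt2}(-i\partial_\mu-E_{\mu\nu}x^\nu)$, $\mathsf{D}^2=\eta^{\mu\nu}\mathsf{D}_\mu\mathsf{D}_\nu$, $\tilde{\mathsf{D}}^2=\eta^{\mu\nu}\tilde{\mathsf{D}}_\mu\tilde{\mathsf{D}}_\nu$; explicitly $\mathsf{D}^2=\frac12\big[-(\partial_t^2-\partial_x^2)-2iE(x\partial_t+t\partial_x)-E^2(t^2-x^2)\big]$ and $\tilde{\mathsf{D}}^2$ is the same with $E\to-E$. The star product is $(f\star g)(\mathbf{x})=\frac1{(2\pi)^2}\int d\mathbf{k}\,d\mathbf{p}\,\mathcal{F}[f](\mathbf{k})\mathcal{F}[g](\mathbf{p})\,e^{\frac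 i2\theta\epsilon_{\mu\nu}k^\mu p^\nu}e^{i(\mathbf{k}+\mathbf{p})\cdot\mathbf{x}}$, where $\mathcal{F}[f](\mathbf{k})=\frac1{2\pi}\int d\mathbf{x}\,e^{-i\mathbf{k}\cdot\mathbf{x}}f(\mathbf{x})$ (extended in the usual way when one factor is the polynomial $H$). *)

theory Defs
  imports "HOL-Analysis.Analysis"
begin

(* Points of R^2 are pairs (t, x) = (x^0, x^1). Indices mu range over {0,1}. *)

definition coord :: "nat \<Rightarrow> real \<times> real \<Rightarrow> real" where
  "coord \<mu> p = (if \<mu> = 0 then fst p else snd p)"

definition basis_vec :: "nat \<Rightarrow> real \<times> real" where
  "basis_vec \<mu> = (if \<mu> = 0 then (1, 0) else (0, 1))"

(* Minkowski metric eta = diag(1,-1) (its inverse is itself) *)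
definition eta :: "nat \<Rightarrow> nat \<Rightarrow> real" where
  "eta \<mu> \<nu> = (if \<mu> = \<nu> then (if \<mu> = 0 then 1 else -1) else 0)"

definition eps :: "nat \<Rightarrow> nat \<Rightarrow> real" where
  "eps \<mu> \<nu> = (if \<mu> = 0 \<and> \<nu> = 1 then 1 else if \<mu> = 1 \<and> \<nu> = 0 then -1 else 0)"

definition mdot :: "real \<times> real \<Rightarrow> real \<times> real \<Rightarrow> real" where
  "mdot k x = (\<Sum>\<mu><2. \<Sum>\<nu><2. eta \<mu> \<nu> * coord \<mu> k * coord \<nu> x)"

definition pd :: "nat \<Rightarrow> (real \<times> real \<Rightarrow> complex) \<Rightarrow> real \<times> real \<Rightarrow> complex" where
  "pd \<mu> f p = vector_derivative (\<lambda>s. f (p + s *\<^sub>R basis_vec \<mu>)) (at 0)"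

fun dpow :: "nat list \<Rightarrow> (real \<times> real \<Rightarrow> complex) \<Rightarrow> real \<times> real \<Rightarrow> complex" where
  "dpow [] f = f"
| "dpow (\<mu> # ms) f = pd \<mu> (dpow ms f)"

definition schwartz :: "(real \<times> real \<Rightarrow> complex) \<Rightarrow> bool" where
  "schwartz f \<longleftrightarrow> (\<forall>ms. (\<forall>p. dpow ms f differentiable (at p)) \<and>
      (\<forall>a b :: nat. bounded (range (\<lambda>p. complex_of_real (fst p ^ a * snd p ^ b) * dpow ms f p))))"

definition Ex :: "real \<Rightarrow> nat \<Rightarrow> real \<times> real \<Rightarrow> real" where
  "Ex E \<mu> p = (\<Sum>\<nu><2. E * eps \<mu> \<nu> * coord \<nu> p)"

definition Dop :: "real \<Rightarrow> nat \<Rightarrow> (real \<times> real \<Rightarrow> complex) \<Rightarrow> real \<times> real \<Rightarrow> complex" where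
  "Dop E \<mu> f p = (1 / complex_of_real (sqrt 2)) * (- \<i> * pd \<mu> f p + complex_of_real (Ex E \<mu> p) * f p)"

definition Dtop :: "real \<Rightarrow> nat \<Rightarrow> (real \<times> real \<Rightarrow> complex) \<Rightarrow> real \<times> real \<Rightarrow> complex" where
  "Dtop E \<mu> f p = (1 / complex_of_real (sqrt 2)) * (- \<i> * pd \<mu> f p - complex_of_real (Ex E \<mu> p) * f p)"

definition Dsq :: "real \<Rightarrow> (real \<times> real \<Rightarrow> complex) \<Rightarrow> real \<times> real \<Rightarrow> complex" where
  "Dsq E f p = (\<Sum>\<mu><2. \<Sum>\<nu><2. complex_of_real (eta \<mu> \<nu>) * Dop E \<mu> (Dop E \<nu> f) p)"

definition Dtsq :: "real \<Rightarrow> (real \<times> real \<Rightarrow> complex) \<Rightarrow> real \<times> real \<Rightarrow> complex" where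
  "Dtsq E f p = (\<Sum>\<mu><2. \<Sum>\<nu><2. complex_of_real (eta \<mu> \<nu>) * Dtop E \<mu> (Dtop E \<nu> f) p)"

definition FT :: "(real \<times> real \<Rightarrow> complex) \<Rightarrow> real \<times> real \<Rightarrow> complex" where
  "FT f k = complex_of_real (1 / (2 * pi)) *
     (\<integral>x. exp (- \<i> * complex_of_real (mdot k x)) * f x \<partial>lborel)"

(* shift vector a(p)^rho = (theta/2) eta^{rho mu} eps_{mu nu} p^nu, so that
   e^{(i/2) theta eps_{mu nu} k^mu p^nu} = e^{i k . a(p)} *)
definition shiftv :: "real \<Rightarrow> real \<times> real \<Rightarrow> real \<times> real" where
  "shiftv \<theta> p = (\<theta> / 2 * (\<Sum>\<mu><2. \<Sum>\<nu><2. eta 0 \<mu> * eps \<mu> \<nu> * coord \<nu> p),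
                   \<theta> / 2 * (\<Sum>\<mu><2. \<Sum>\<nu><2. eta 1 \<mu> * eps \<mu> \<nu> * coord \<nu> p))"

(* Star product with a polynomial factor P, obtained from the defining formula
   by performing the k-integral against the (distributional) Fourier transform
   of the polynomial: int dk F[P](k) e^{i k.y} = 2 pi P(y). *)
definition star_poly_left :: "real \<Rightarrow> (real \<times> real \<Rightarrow> complex) \<Rightarrow> (real \<times> real \<Rightarrow> complex) \<Rightarrow> real \<times> real \<Rightarrow> complex" where
  "star_poly_left \<theta> P f x = complex_of_real (1 / (2 * pi)) *
     (\<integral>p. FT f p * P (x + shiftv \<theta> p) * exp (\<i> * complex_of_real (mdot p x)) \<partial>lborel)"

definition star_poly_right :: "real \<Rightarrow> (real \<times> real \<Rightarrow> complex) \<Rightarrow> (real \<times> real \<Rightarrow> complex) \<Rightarrow> real \<times> real \<Rightarrow> complex" where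
  "star_poly_right \<theta> f P x = complex_of_real (1 / (2 * pi)) *
     (\<integral>k. FT f k * P (x - shiftv \<theta> k) * exp (\<i> * complex_of_real (mdot k x)) \<partial>lborel)"

definition Hpoly :: "real \<times> real \<Rightarrow> complex" where
  "Hpoly p = complex_of_real ((snd p ^ 2 - fst p ^ 2) / 2)"

end

theory Submission
  imports Defs "HOL-Probability.Probability"
begin

text \<open>Write F for the Fourier transform. By Fourier inversion
  f(x) = (2\<pi>)^-1 \<integral> F[f](p) e^{i p\<cdot>x} dp, and the star product with the polynomial H only
  evaluates H at a shifted point: (H \<star> f)(x) = (2\<pi>)^-1 \<integral> F[f](p) H(x + a(p)) e^{i p\<cdot>x} dp with
  a(p) = (\<theta>/2)(p^1, p^0). For \<theta> = 2/E the map p \<mapsto> E^2 H(x + a(p)) is a quadratic polynomial, and as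
  F[\<partial>_\<mu> f](p) = i (p\<cdot>e_\<mu>) F[f](p), each of its monomials turns back into a derivative of f:
  inverting the transform once more gives exactly the second order operator D^2. The identity for
  the tilde operator is the same statement for -E and -\<theta>. Fourier inversion itself is proved by
  damping with Gaussians of width 1/l and letting l \<rightarrow> 0 by dominated convergence.\<close>


section \<open>Coordinates and partial derivatives\<close>

lemma mdot_eq: "mdot k x = fst k * fst x - snd k * snd x"
  by (simp add: mdot_def eta_def coord_def numeral_2_eq_2)

lemma mdot_add_right: "mdot k (x + y) = mdot k x + mdot k y"
  and mdot_scaleR_right: "mdot k (c *\<^sub>R x) = c * mdot k x"
  and mdot_uminus_left: "mdot (- k) x = - mdot k x"
  by (simp_all add: mdot_eq algebra_simps)

lemma mdot_basis_vec: "mdot k (basis_vec \<mu>) = (if \<mu> = 0 then fst k else - snd k)"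
  by (simp add: mdot_eq basis_vec_def)

lemma shiftv_eq: "shiftv \<theta> p = (\<theta> / 2 * snd p, \<theta> / 2 * fst p)"
  by (simp add: shiftv_def eta_def eps_def coord_def numeral_2_eq_2)

lemma Ex_0: "Ex E 0 q = E * snd q"
  by (simp add: Ex_def eps_def coord_def numeral_2_eq_2)

lemma Ex_1: "Ex E 1 q = - E * fst q"
  by (simp add: Ex_def eps_def coord_def numeral_2_eq_2)

lemma Ex_basis_vec_self: "Ex E \<mu> (basis_vec \<mu>) = 0"
  by (simp add: Ex_def eps_def coord_def basis_vec_def numeral_2_eq_2)

lemma has_vector_derivative_along_line:
  assumes "(g has_derivative D) (at (p + s *\<^sub>R v))"
  shows "((\<lambda>s. g (p + s *\<^sub>R v)) has_vector_derivative D v) (at s)"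
proof -
  have "((\<lambda>s. p + s *\<^sub>R v) has_derivative (\<lambda>h. h *\<^sub>R v)) (at s)"
    by (auto intro!: derivative_eq_intros)
  from has_derivative_compose[OF this assms]
  have "((\<lambda>s. g (p + s *\<^sub>R v)) has_derivative (\<lambda>h. D (h *\<^sub>R v))) (at s)" .
  moreover have "(\<lambda>h. D (h *\<^sub>R v)) = (\<lambda>h. h *\<^sub>R D v)"
    using linear_cmul[OF has_derivative_linear[OF assms]] by auto
  ultimately show ?thesis
    unfolding has_vector_derivative_def by simp
qed

lemma pd_eq_derivative:
  assumes "(g has_derivative D) (at p)"
  shows "pd \<mu> g p = D (basis_vec \<mu>)"
  unfolding pd_def
  using has_vector_derivative_along_line[of g D p 0 "basis_vec \<mu>"] assms
  by (simp add: vector_derivative_at)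

lemma has_vector_derivative_pd:
  assumes "g differentiable (at (p + s *\<^sub>R basis_vec \<mu>))"
  shows "((\<lambda>s. g (p + s *\<^sub>R basis_vec \<mu>)) has_vector_derivative pd \<mu> g (p + s *\<^sub>R basis_vec \<mu>)) (at s)"
proof -
  obtain D where D: "(g has_derivative D) (at (p + s *\<^sub>R basis_vec \<mu>))"
    using assms unfolding differentiable_def by blast
  show ?thesis
    unfolding pd_eq_derivative[OF D] by (rule has_vector_derivative_along_line[OF D])
qed

section \<open>Integrals over the line and the plane\<close>

lemma one_add_power2_pos: "0 < 1 + (x::real)\<^sup>2"
  by (simp add: add_pos_nonneg)

lemma integrable_inverse_one_add_power2: "integrable lborel (\<lambda>x::real. 1 / (1 + x\<^sup>2))"
proof -
  have "set_integrable lborel (einterval (-\<infinity>) \<infinity>) (\<lambda>x::real. 1 / (1 + x\<^sup>2))"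
  proof (rule interval_integral_FTC_nonneg(1)[where F=arctan and A="-(pi/2)" and B="pi/2"])
    show "((arctan \<circ> real_of_ereal) \<longlongrightarrow> -(pi/2)) (at_right (-\<infinity>))"
      unfolding ereal_tendsto_simps1 by (rule tendsto_arctan_at_bot)
    show "((arctan \<circ> real_of_ereal) \<longlongrightarrow> pi/2) (at_left \<infinity>)"
      unfolding ereal_tendsto_simps1 by (rule tendsto_arctan_at_top)
  qed (auto intro!: derivative_eq_intros continuous_intros
        simp: power2_eq_square divide_inverse one_add_power2_pos[THEN less_imp_neq, THEN not_sym, unfolded power2_eq_square])
  then show ?thesis by (simp add: set_integrable_def)
qed

lemma inverse_one_add_power2_tendsto_0:
  "((\<lambda>s::real. 1 / (1 + s\<^sup>2)) \<longlongrightarrow> 0) at_top" "((\<lambda>s::real. 1 / (1 + s\<^sup>2)) \<longlongrightarrow> 0) at_bot"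
proof -
  have "filterlim (\<lambda>s::real. 1 + s\<^sup>2) at_top at_top"
    by (intro filterlim_tendsto_add_at_top[OF tendsto_const] filterlim_pow_at_top filterlim_ident) simp
  then show top: "((\<lambda>s::real. 1 / (1 + s\<^sup>2)) \<longlongrightarrow> 0) at_top"
    by (intro tendsto_divide_0[OF tendsto_const] filterlim_at_top_imp_at_infinity)
  then show "((\<lambda>s::real. 1 / (1 + s\<^sup>2)) \<longlongrightarrow> 0) at_bot"
    unfolding filterlim_at_bot_mirror by simp
qed

lemma integral_derivative_eq_0_if_decaying:
  fixes h h' :: "real \<Rightarrow> complex"
  assumes deriv: "\<And>s. (h has_vector_derivative h' s) (at s)"
    and cont: "continuous_on UNIV h'"
    and h_le: "\<And>s. norm (h s) \<le> C / (1 + s\<^sup>2)"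
    and h'_le: "\<And>s. norm (h' s) \<le> D / (1 + s\<^sup>2)"
  shows "integral\<^sup>L lborel h' = 0"
proof -
  have "integrable lborel h'"
  proof (rule Bochner_Integration.integrable_bound)
    show "integrable lborel (\<lambda>s. D * (1 / (1 + s\<^sup>2)))"
      by (intro integrable_mult_right integrable_inverse_one_add_power2)
    show "h' \<in> borel_measurable lborel"
      using cont by (simp add: borel_measurable_continuous_onI)
    show "AE s in lborel. norm (h' s) \<le> norm (D * (1 / (1 + s\<^sup>2)))"
      by (intro AE_I2 order_trans[OF h'_le]) (simp add: divide_right_mono)
  qed
  moreover have "(h \<longlongrightarrow> 0) F" if "((\<lambda>s::real. 1 / (1 + s\<^sup>2)) \<longlongrightarrow> 0) F" for F
    by (rule Lim_null_comparison[OF always_eventually tendsto_mult_right_zero[OF that, of C]])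
      (use h_le in simp)
  ultimately have "(LBINT s=-\<infinity>..\<infinity>. h' s) = 0 - 0"
    using inverse_one_add_power2_tendsto_0 deriv cont
    by (intro interval_integral_FTC_integrable[where F=h])
      (auto simp: ereal_tendsto_simps1 set_integrable_def continuous_on_eq_continuous_at)
  then show ?thesis
    by (simp add: interval_lebesgue_integral_def set_lebesgue_integral_def)
qed

lemma
  fixes a :: "'a::euclidean_space \<Rightarrow> complex" and b :: "'b::euclidean_space \<Rightarrow> complex"
  assumes a: "integrable lborel a" and b: "integrable lborel b"
  shows integrable_tensor_lborel: "integrable lborel (\<lambda>p. a (fst p) * b (snd p))"
    and integral_tensor_lborel:
      "(\<integral>p. a (fst p) * b (snd p) \<partial>lborel) = (\<integral>x. a x \<partial>lborel) * (\<integral>y. b y \<partial>lborel)"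
proof -
  have [measurable]: "a \<in> borel_measurable borel" "b \<in> borel_measurable borel"
    using a b by (simp_all add: borel_measurable_integrable)
  have i: "integrable (lborel \<Otimes>\<^sub>M lborel) (\<lambda>p. a (fst p) * b (snd p))"
  proof (rule lborel_pair.Fubini_integrable)
    show "integrable lborel (\<lambda>x. \<integral>y. norm (a (fst (x, y)) * b (snd (x, y))) \<partial>lborel)"
      using a by (simp add: norm_mult integrable_norm)
  qed (use b in simp_all)
  then show "integrable lborel (\<lambda>p. a (fst p) * b (snd p))"
    by (simp add: lborel_prod)
  have "(\<integral>p. a (fst p) * b (snd p) \<partial>lborel) = (\<integral>x. (\<integral>y. a x * b y \<partial>lborel) \<partial>lborel)"
    using lborel_pair.integral_fst'[OF i] by (simp add: lborel_prod)
  then show "(\<integral>p. a (fst p) * b (snd p) \<partial>lborel) = (\<integral>x. a x \<partial>lborel) * (\<integral>y. b y \<partial>lborel)"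
    by simp
qed

lemma integral_lborel_affine:
  fixes F :: "'a::euclidean_space \<Rightarrow> 'b::{banach, second_countable_topology}"
  assumes c: "c \<noteq> 0" and [measurable]: "F \<in> borel_measurable borel"
  shows "(\<integral>y. F y \<partial>lborel) = (\<bar>c\<bar> ^ DIM('a)) *\<^sub>R (\<integral>w. F (t + c *\<^sub>R w) \<partial>lborel)"
proof -
  have "(\<integral>y. F y \<partial>lborel)
      = (\<integral>y. F y \<partial>density (distr lborel borel (\<lambda>w. t + c *\<^sub>R w)) (\<lambda>_. ennreal (\<bar>c\<bar> ^ DIM('a))))"
    by (subst lborel_affine[OF c, of t]) simp
  also have "\<dots> = (\<integral>y. (\<bar>c\<bar> ^ DIM('a)) *\<^sub>R F y \<partial>distr lborel borel (\<lambda>w. t + c *\<^sub>R w))"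
    by (rule integral_density) auto
  also have "\<dots> = (\<integral>w. (\<bar>c\<bar> ^ DIM('a)) *\<^sub>R F (t + c *\<^sub>R w) \<partial>lborel)"
    by (rule integral_distr) auto
  finally show ?thesis by simp
qed

section \<open>Schwartz functions\<close>

lemma dpow_append: "dpow ms (dpow ms' f) = dpow (ms @ ms') f"
  by (induction ms) auto

lemma schwartz_pd:
  assumes "schwartz f"
  shows "schwartz (pd \<mu> f)"
proof -
  have "dpow ms (pd \<mu> f) = dpow (ms @ [\<mu>]) f" for ms
    using dpow_append[of ms "[\<mu>]" f] by simp
  with assms show ?thesis
    unfolding schwartz_def by simp
qed

lemma schwartz_differentiable: "schwartz f \<Longrightarrow> f differentiable (at p)"
  unfolding schwartz_def by (metis (no_types) dpow.simps(1))

lemma schwartz_continuous: "schwartz f \<Longrightarrow> continuous_on UNIV f"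
  by (intro continuous_at_imp_continuous_on ballI differentiable_imp_continuous_within
      schwartz_differentiable)

lemma schwartz_measurable[measurable]: "schwartz f \<Longrightarrow> f \<in> borel_measurable borel"
  using schwartz_continuous borel_measurable_continuous_onI by blast

text \<open>Dominates, up to constants, every Schwartz function and its Fourier transform.\<close>

definition weight :: "real \<times> real \<Rightarrow> real" where
  "weight p = 1 / (1 + (fst p)\<^sup>2) * (1 / (1 + (snd p)\<^sup>2))"

lemma weight_pos: "weight p > 0"
  unfolding weight_def by (simp add: add_pos_nonneg)

lemma weight_le_1: "weight p \<le> 1"
  unfolding weight_def by (intro mult_le_one) (auto simp: add_pos_nonneg)

lemma weight_swap: "weight (x, y) = weight (y, x)"
  by (simp add: weight_def)

lemma weight_eq_divide: "weight (s, y) = (1 / (1 + y\<^sup>2)) / (1 + s\<^sup>2)"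
  by (simp add: weight_def)

lemma integrable_weight: "integrable lborel weight"
proof -
  have "integrable lborel (\<lambda>x::real. complex_of_real (1 / (1 + x\<^sup>2)))"
    using integrable_inverse_one_add_power2 by (rule integrable_of_real)
  from integrable_tensor_lborel[OF this this]
  show ?thesis
    using integrable_Re by (fastforce simp: weight_def[abs_def])
qed

lemma schwartz_moment_bounded:
  assumes "schwartz f"
  obtains B where "\<And>p. \<bar>fst p ^ a * snd p ^ b\<bar> * norm (f p) \<le> B"
proof -
  have "bounded (range (\<lambda>p. complex_of_real (fst p ^ a * snd p ^ b) * f p))"
    using assms unfolding schwartz_def by (metis (no_types) dpow.simps(1))
  then obtain B where "\<forall>z\<in>range (\<lambda>p. complex_of_real (fst p ^ a * snd p ^ b) * f p). norm z \<le> B"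
    unfolding bounded_iff by blast
  then show thesis
    by (intro that[of B]) (auto simp: norm_mult norm_power abs_mult power_abs)
qed

lemma schwartz_le_weight:
  assumes "schwartz f"
  obtains C where "\<And>p. norm (f p) \<le> C * weight p"
proof -
  obtain B00 B20 B02 B22 where
    "\<And>p. \<bar>fst p ^ 0 * snd p ^ 0\<bar> * norm (f p) \<le> B00"
    "\<And>p. \<bar>fst p ^ 2 * snd p ^ 0\<bar> * norm (f p) \<le> B20"
    "\<And>p. \<bar>fst p ^ 0 * snd p ^ 2\<bar> * norm (f p) \<le> B02"
    "\<And>p. \<bar>fst p ^ 2 * snd p ^ 2\<bar> * norm (f p) \<le> B22"
    using schwartz_moment_bounded[OF assms] by metis
  note B = this
  have "norm (f p) * ((1 + (fst p)\<^sup>2) * (1 + (snd p)\<^sup>2)) \<le> B00 + B20 + B02 + B22" for p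
    using B(1)[of p] B(2)[of p] B(3)[of p] B(4)[of p] by (simp add: algebra_simps abs_mult)
  then have "norm (f p) \<le> (B00 + B20 + B02 + B22) * weight p" for p
    by (simp add: weight_def pos_le_divide_eq add_pos_nonneg)
  then show thesis by (rule that)
qed

lemma schwartz_bounded:
  assumes "schwartz f"
  obtains B where "\<And>p. norm (f p) \<le> B"
proof -
  obtain C where C: "\<And>p. norm (f p) \<le> C * weight p"
    using schwartz_le_weight[OF assms] by blast
  have "norm (f p) \<le> \<bar>C\<bar>" for p
  proof -
    have "norm (f p) \<le> \<bar>C\<bar> * weight p"
      using C[of p] weight_pos[of p] by (meson abs_ge_self less_imp_le mult_right_mono order_trans)
    also have "\<dots> \<le> \<bar>C\<bar>"
      using weight_le_1 by (simp add: mult_left_le)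
    finally show ?thesis .
  qed
  then show thesis by (rule that)
qed

lemma integrable_if_le_weight:
  fixes F :: "real \<times> real \<Rightarrow> complex"
  assumes "F \<in> borel_measurable borel" "\<And>p. norm (F p) \<le> D * weight p"
  shows "integrable lborel F"
proof (rule Bochner_Integration.integrable_bound)
  show "integrable lborel (\<lambda>p. D * weight p)" by (intro integrable_mult_right integrable_weight)
  show "AE p in lborel. norm (F p) \<le> norm (D * weight p)"
    using weight_pos
    by (intro AE_I2 order_trans[OF assms(2)]) (simp add: abs_mult abs_of_pos less_imp_le mult_right_mono)
qed (use assms(1) in simp)

lemma integral_derivative_along_basis_eq_0:
  fixes F F' :: "real \<times> real \<Rightarrow> complex"
  assumes deriv: "\<And>p s. ((\<lambda>s. F (p + s *\<^sub>R basis_vec \<mu>)) has_vector_derivative F' (p + s *\<^sub>R basis_vec \<mu>)) (at s)"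
    and cont: "continuous_on UNIV F'"
    and F_le: "\<And>p. norm (F p) \<le> C * weight p" and F'_le: "\<And>p. norm (F' p) \<le> D * weight p"
  shows "integral\<^sup>L lborel F' = 0"
proof -
  have [measurable]: "F' \<in> borel_measurable borel"
    using cont borel_measurable_continuous_onI by blast
  have "integrable (lborel \<Otimes>\<^sub>M lborel) (\<lambda>(x, y). F' (x, y))"
    using integrable_if_le_weight[OF _ F'_le] by (simp add: lborel_prod)
  note fubini = lborel_pair.integral_fst[OF this] lborel_pair.integral_snd[OF this]
  have slice: "integral\<^sup>L lborel (\<lambda>s. F' (g s)) = 0"
    if g: "\<And>s. g s = p + s *\<^sub>R basis_vec \<mu>" and wg: "\<And>s. weight (g s) = c / (1 + s\<^sup>2)"
      and "c \<ge> 0" and cg: "continuous_on UNIV g"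
    for g p c
  proof (rule integral_derivative_eq_0_if_decaying[where h="\<lambda>s. F (g s)"])
    show "((\<lambda>s. F (g s)) has_vector_derivative F' (g s)) (at s)" for s
      unfolding g by (rule deriv)
    show "continuous_on UNIV (\<lambda>s. F' (g s))"
      by (rule continuous_on_compose2[OF cont cg]) simp
    show "norm (F (g s)) \<le> (C * c) / (1 + s\<^sup>2)" for s
      using F_le[of "g s"] by (simp add: wg)
    show "norm (F' (g s)) \<le> (D * c) / (1 + s\<^sup>2)" for s
      using F'_le[of "g s"] by (simp add: wg)
  qed
  show ?thesis
  proof (cases "\<mu> = 0")
    case True
    have "(\<integral>s. F' (s, y) \<partial>lborel) = 0" for y
      by (rule slice[where p="(0, y)" and c="1 / (1 + y\<^sup>2)"])
        (auto simp: True basis_vec_def weight_eq_divide intro!: continuous_intros)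
    then show ?thesis using fubini(2) by (simp add: lborel_prod)
  next
    case False
    have "(\<integral>s. F' (y, s) \<partial>lborel) = 0" for y
      by (rule slice[where p="(y, 0)" and c="1 / (1 + y\<^sup>2)"])
        (auto simp: False basis_vec_def weight_swap[of y] weight_eq_divide intro!: continuous_intros)
    then show ?thesis using fubini(1) by (simp add: lborel_prod)
  qed
qed

section \<open>The Fourier transform\<close>

definition plane_wave :: "real \<times> real \<Rightarrow> real \<times> real \<Rightarrow> complex" where
  "plane_wave k x = exp (\<i> * complex_of_real (mdot k x))"

lemma plane_wave_add: "plane_wave k (x + y) = plane_wave k x * plane_wave k y"
  by (simp add: plane_wave_def mdot_add_right distrib_left exp_add)

lemma plane_wave_uminus_left: "plane_wave (- k) x = plane_wave k (- x)"
  by (simp add: plane_wave_def mdot_eq)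

lemma norm_plane_wave [simp]: "norm (plane_wave k x) = 1"
  unfolding plane_wave_def by (rule norm_exp_i_times)

lemma continuous_on_plane_wave [continuous_intros]:
  "continuous_on S f \<Longrightarrow> continuous_on S g \<Longrightarrow> continuous_on S (\<lambda>z. plane_wave (f z) (g z))"
  unfolding plane_wave_def mdot_eq by (intro continuous_intros)

lemma has_vector_derivative_plane_wave:
  "((\<lambda>s. plane_wave k (p + s *\<^sub>R v)) has_vector_derivative
      \<i> * complex_of_real (mdot k v) * plane_wave k (p + s *\<^sub>R v)) (at s)"
proof -
  define f where "f z = exp (\<i> * complex_of_real (mdot k p) + \<i> * complex_of_real (mdot k v) * z)"
    for z
  have "(f has_field_derivative \<i> * complex_of_real (mdot k v) * f (complex_of_real s))
      (at (complex_of_real s))"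
    unfolding f_def by (auto intro!: derivative_eq_intros)
  moreover have "f (complex_of_real s) = plane_wave k (p + s *\<^sub>R v)" for s
    by (simp add: f_def plane_wave_def mdot_add_right mdot_scaleR_right algebra_simps)
  ultimately show ?thesis
    using has_vector_derivative_real_field by fastforce
qed

lemma FT_eq_plane_wave:
  "FT g k = complex_of_real (1 / (2 * pi)) * (\<integral>y. plane_wave (- k) y * g y \<partial>lborel)"
  by (simp add: FT_def plane_wave_def mdot_uminus_left)

lemma integrable_plane_wave_mult:
  assumes "schwartz g"
  shows "integrable lborel (\<lambda>y. plane_wave k y * g y)"
proof -
  obtain C where "\<And>p. norm (g p) \<le> C * weight p"
    using schwartz_le_weight[OF assms] by blast
  moreover have "(\<lambda>y. plane_wave k y * g y) \<in> borel_measurable borel"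
    using assms by (intro borel_measurable_continuous_onI continuous_intros schwartz_continuous)
  ultimately show ?thesis
    by (intro integrable_if_le_weight) (auto simp: norm_mult)
qed

text \<open>Integration by parts, with the boundary terms killed by the decay of Schwartz functions.\<close>

lemma FT_pd:
  assumes g: "schwartz g"
  shows "FT (pd \<mu> g) k = \<i> * complex_of_real (mdot k (basis_vec \<mu>)) * FT g k"
proof -
  define e where "e = basis_vec \<mu>"
  define c where "c = \<i> * complex_of_real (mdot k e)"
  have g': "schwartz (pd \<mu> g)" using schwartz_pd[OF g] .
  obtain C0 where C0: "\<And>p. norm (g p) \<le> C0 * weight p" using schwartz_le_weight[OF g] by blast
  obtain C1 where C1: "\<And>p. norm (pd \<mu> g p) \<le> C1 * weight p" using schwartz_le_weight[OF g'] by blast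
  define F' where "F' y = plane_wave (- k) y * pd \<mu> g y - c * (plane_wave (- k) y * g y)" for y
  have "integral\<^sup>L lborel F' = 0"
  proof (rule integral_derivative_along_basis_eq_0[where F="\<lambda>y. plane_wave (- k) y * g y" and C=C0 and D="C1 + norm c * C0"])
    show "((\<lambda>s. plane_wave (- k) (p + s *\<^sub>R basis_vec \<mu>) * g (p + s *\<^sub>R basis_vec \<mu>))
        has_vector_derivative F' (p + s *\<^sub>R basis_vec \<mu>)) (at s)" for p s
      using has_vector_derivative_mult[OF has_vector_derivative_plane_wave[of "- k" p "basis_vec \<mu>" s]
          has_vector_derivative_pd[OF schwartz_differentiable[OF g]]]
      by (rule has_vector_derivative_eq_rhs) (simp add: F'_def c_def e_def mdot_uminus_left algebra_simps)
    show "continuous_on UNIV F'"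
      unfolding F'_def by (intro continuous_intros schwartz_continuous g g')
    show "norm (plane_wave (- k) p * g p) \<le> C0 * weight p" for p
      by (simp add: norm_mult C0)
    show "norm (F' p) \<le> (C1 + norm c * C0) * weight p" for p
    proof -
      have "norm (F' p) \<le> norm (plane_wave (- k) p * pd \<mu> g p) + norm (c * (plane_wave (- k) p * g p))"
        unfolding F'_def by (rule norm_triangle_ineq4)
      also have "\<dots> = norm (pd \<mu> g p) + norm c * norm (g p)"
        by (simp add: norm_mult)
      also have "\<dots> \<le> C1 * weight p + norm c * (C0 * weight p)"
        by (intro add_mono C1 mult_left_mono C0) simp
      finally show ?thesis by (simp add: algebra_simps)
    qed
  qed
  then have "(\<integral>y. plane_wave (- k) y * pd \<mu> g y \<partial>lborel) = c * (\<integral>y. plane_wave (- k) y * g y \<partial>lborel)"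
    unfolding F'_def using integrable_plane_wave_mult[OF g'] integrable_plane_wave_mult[OF g] by simp
  then show ?thesis
    unfolding FT_eq_plane_wave c_def e_def by simp
qed

lemma FT_pd_pd:
  "schwartz g \<Longrightarrow> FT (pd \<mu> (pd \<mu> g)) k = - complex_of_real ((mdot k (basis_vec \<mu>))\<^sup>2) * FT g k"
  by (simp add: FT_pd schwartz_pd power2_eq_square algebra_simps)

lemma norm_FT_le: "norm (FT h k) \<le> 1 / (2 * pi) * (\<integral>y. norm (h y) \<partial>lborel)"
proof -
  have "norm (FT h k) = 1 / (2 * pi) * norm (\<integral>y. plane_wave (- k) y * h y \<partial>lborel)"
    unfolding FT_eq_plane_wave norm_mult norm_of_real by simp
  also have "\<dots> \<le> 1 / (2 * pi) * (\<integral>y. norm (plane_wave (- k) y * h y) \<partial>lborel)"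
    by (intro mult_left_mono integral_norm_bound) simp
  finally show ?thesis by (simp add: norm_mult)
qed

text \<open>(1 + k_0^2)(1 + k_1^2) FT g k is the transform of (1 - \<partial>_0^2)(1 - \<partial>_1^2) g, and a transform
  is bounded by the L^1 norm.\<close>

lemma FT_le_weight:
  assumes g: "schwartz g"
  obtains C where "\<And>k. norm (FT g k) \<le> C * weight k"
proof -
  define g0 where "g0 = pd 0 (pd 0 g)"
  define g1 where "g1 = pd 1 (pd 1 g)"
  define g01 where "g01 = pd 0 (pd 0 g1)"
  have s: "schwartz g0" "schwartz g1" "schwartz g01"
    unfolding g0_def g1_def g01_def using g by (auto intro: schwartz_pd)
  define N where "N h = 1 / (2 * pi) * (\<integral>y. norm (h y) \<partial>lborel)" for h :: "real \<times> real \<Rightarrow> complex"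
  define C where "C = N g + N g0 + N g1 + N g01"
  have "norm (FT g k) \<le> C * weight k" for k
  proof -
    let ?m = "(1 + (fst k)\<^sup>2) * (1 + (snd k)\<^sup>2)"
    have eq: "complex_of_real ?m * FT g k = FT g k - FT g0 k - FT g1 k + FT g01 k"
      unfolding g0_def g1_def g01_def FT_pd_pd[OF g] FT_pd_pd[OF s(2)[unfolded g1_def]]
      by (simp add: mdot_basis_vec algebra_simps)
    have "?m * norm (FT g k) = norm (complex_of_real ?m * FT g k)"
      unfolding norm_mult norm_of_real by (simp add: abs_of_nonneg)
    also have "\<dots> \<le> norm (FT g k) + norm (FT g0 k) + norm (FT g1 k) + norm (FT g01 k)"
      unfolding eq
      by (intro order_trans[OF norm_triangle_ineq] add_mono order_trans[OF norm_triangle_ineq4]) auto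
    also have "\<dots> \<le> C"
      unfolding C_def N_def by (intro add_mono norm_FT_le)
    finally have "norm (FT g k) \<le> C / ?m"
      by (simp add: pos_le_divide_eq one_add_power2_pos mult.commute)
    then show ?thesis
      by (simp add: weight_def)
  qed
  then show thesis by (rule that)
qed

lemma FT_measurable[measurable]:
  assumes g: "schwartz g"
  shows "FT g \<in> borel_measurable borel"
proof -
  have "(\<lambda>z. plane_wave (- fst z) (snd z) * g (snd z)) \<in> borel_measurable borel"
    by (intro borel_measurable_continuous_onI continuous_intros
        continuous_on_compose2[OF schwartz_continuous[OF g]]) auto
  then have "(\<lambda>(k, y). plane_wave (- k) y * g y) \<in> borel_measurable (lborel \<Otimes>\<^sub>M lborel)"
    by (simp add: lborel_prod case_prod_beta')
  from lborel.borel_measurable_lebesgue_integral[OF this]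
  have "(\<lambda>k. \<integral>y. plane_wave (- k) y * g y \<partial>lborel) \<in> borel_measurable borel"
    by simp
  then show ?thesis
    unfolding FT_eq_plane_wave[abs_def] by (intro borel_measurable_times borel_measurable_const)
qed

lemma integrable_FT_plane_wave:
  assumes g: "schwartz g"
  shows "integrable lborel (\<lambda>p. FT g p * plane_wave p x)"
proof -
  obtain C where "\<And>k. norm (FT g k) \<le> C * weight k"
    using FT_le_weight[OF g] by blast
  moreover have "(\<lambda>p. FT g p * plane_wave p x) \<in> borel_measurable borel"
    using g by (intro borel_measurable_times FT_measurable borel_measurable_continuous_onI continuous_intros)
  ultimately show ?thesis
    by (intro integrable_if_le_weight) (auto simp: norm_mult)
qed

section \<open>Fourier inversion\<close>

lemma
  fixes a l :: real
  assumes l: "l \<noteq> 0"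
  shows integrable_exp_i_gaussian:
      "integrable lborel (\<lambda>s. exp (\<i> * complex_of_real (a * s)) * complex_of_real (exp (- (l\<^sup>2 * s\<^sup>2) / 2)))"
    and integral_exp_i_gaussian:
      "(\<integral>s. exp (\<i> * complex_of_real (a * s)) * complex_of_real (exp (- (l\<^sup>2 * s\<^sup>2) / 2)) \<partial>lborel)
        = complex_of_real (sqrt (2 * pi) / \<bar>l\<bar> * exp (- a\<^sup>2 / (2 * l\<^sup>2)))"
proof -
  define F where "F x = exp (\<i> * complex_of_real (a / l * x)) * complex_of_real (exp (- x\<^sup>2 / 2))" for x
  have F_affine: "F (0 + l * s) = exp (\<i> * complex_of_real (a * s)) * complex_of_real (exp (- (l\<^sup>2 * s\<^sup>2) / 2))"
    for s
    using l by (simp add: F_def power_mult_distrib)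
  have "integrable lborel (\<lambda>x. std_normal_density x)"
    using integrable_std_normal_moment[of 0] by simp
  then have "integrable lborel F"
    by (rule Bochner_Integration.integrable_bound[where f="\<lambda>x. sqrt (2 * pi) * std_normal_density x",
          OF integrable_mult_right])
      (auto simp: F_def norm_mult std_normal_density_def l intro!: borel_measurable_continuous_onI continuous_intros)
  then show "integrable lborel (\<lambda>s. exp (\<i> * complex_of_real (a * s)) * complex_of_real (exp (- (l\<^sup>2 * s\<^sup>2) / 2)))"
    using lborel_integrable_real_affine[OF _ l, of F 0] unfolding F_affine by simp
  have "complex_of_real (exp (- (a / l)\<^sup>2 / 2)) = char std_normal_distribution (a / l)"
    by (simp add: char_std_normal_distribution)
  also have "\<dots> = (\<integral>x. std_normal_density x *\<^sub>R iexp (a / l * x) \<partial>lborel)"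
    unfolding char_def by (subst integral_density) (auto simp: normal_density_nonneg)
  also have "\<dots> = complex_of_real (1 / sqrt (2 * pi)) * (\<integral>x. F x \<partial>lborel)"
    by (simp add: F_def std_normal_density_def scaleR_conv_of_real mult_ac)
  finally have "(\<integral>x. F x \<partial>lborel) = complex_of_real (sqrt (2 * pi) * exp (- (a / l)\<^sup>2 / 2))"
    by (simp add: field_simps)
  moreover have "(\<integral>x. F x \<partial>lborel) = \<bar>l\<bar> *\<^sub>R (\<integral>s. F (0 + l * s) \<partial>lborel)"
    by (rule lborel_integral_real_affine[OF l])
  ultimately show "(\<integral>s. exp (\<i> * complex_of_real (a * s)) * complex_of_real (exp (- (l\<^sup>2 * s\<^sup>2) / 2)) \<partial>lborel)
      = complex_of_real (sqrt (2 * pi) / \<bar>l\<bar> * exp (- a\<^sup>2 / (2 * l\<^sup>2)))"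
    unfolding F_affine using l by (simp add: scaleR_conv_of_real power_divide field_simps)
qed

definition gauss :: "real \<Rightarrow> real \<times> real \<Rightarrow> complex" where
  "gauss l p = complex_of_real (exp (- (l\<^sup>2 * (fst p)\<^sup>2) / 2) * exp (- (l\<^sup>2 * (snd p)\<^sup>2) / 2))"

lemma norm_gauss_le_1: "norm (gauss l p) \<le> 1"
  unfolding gauss_def norm_of_real by (simp add: mult_le_one)

lemma continuous_on_gauss: "continuous_on UNIV (gauss l)"
  unfolding gauss_def by (intro continuous_intros) simp_all

lemma integral_plane_wave_gauss:
  assumes l: "l \<noteq> 0"
  shows "integrable lborel (\<lambda>p. plane_wave p z * gauss l p)"
    and "(\<integral>p. plane_wave p z * gauss l p \<partial>lborel) = complex_of_real (2 * pi / l\<^sup>2) * gauss (1 / l) z"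
proof -
  define a where "a c s = exp (\<i> * complex_of_real (c * s)) * complex_of_real (exp (- (l\<^sup>2 * s\<^sup>2) / 2))"
    for c s :: real
  have split: "plane_wave p z * gauss l p = a (fst z) (fst p) * a (- snd z) (snd p)" for p
  proof -
    have arg: "\<i> * complex_of_real (mdot p z)
        = \<i> * complex_of_real (fst z * fst p) + \<i> * complex_of_real (- snd z * snd p)"
      by (simp add: mdot_eq algebra_simps)
    show ?thesis
      unfolding plane_wave_def arg exp_add a_def gauss_def of_real_mult by (simp only: mult_ac)
  qed
  have int: "integrable lborel (a c)" for c
    unfolding a_def[abs_def] using integrable_exp_i_gaussian[OF l] .
  show "integrable lborel (\<lambda>p. plane_wave p z * gauss l p)"
    unfolding split by (rule integrable_tensor_lborel[OF int int])
  have "(\<integral>p. plane_wave p z * gauss l p \<partial>lborel) = (\<integral>s. a (fst z) s \<partial>lborel) * (\<integral>s. a (- snd z) s \<partial>lborel)"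
    unfolding split by (rule integral_tensor_lborel[OF int int])
  also have "\<dots> = complex_of_real (sqrt (2 * pi) / \<bar>l\<bar> * exp (- (fst z)\<^sup>2 / (2 * l\<^sup>2))
      * (sqrt (2 * pi) / \<bar>l\<bar> * exp (- (snd z)\<^sup>2 / (2 * l\<^sup>2))))"
    unfolding a_def integral_exp_i_gaussian[OF l] power2_minus by (simp only: of_real_mult)
  also have "\<dots> = complex_of_real (2 * pi / l\<^sup>2) * gauss (1 / l) z"
  proof -
    have sq: "sqrt (2 * pi) / \<bar>l\<bar> * (sqrt (2 * pi) / \<bar>l\<bar>) = 2 * pi / l\<^sup>2"
      by (simp add: power2_eq_square)
    have ex: "- c\<^sup>2 / (2 * l\<^sup>2) = - ((1 / l)\<^sup>2 * c\<^sup>2) / 2" for c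
      by (simp add: power_divide)
    show ?thesis
      unfolding gauss_def ex sq[symmetric] of_real_mult[symmetric] by (simp only: mult_ac)
  qed
  finally show "(\<integral>p. plane_wave p z * gauss l p \<partial>lborel) = complex_of_real (2 * pi / l\<^sup>2) * gauss (1 / l) z" .
qed

lemma integrable_gauss: "l \<noteq> 0 \<Longrightarrow> integrable lborel (gauss l)"
  using integral_plane_wave_gauss(1)[of l 0] by (simp add: plane_wave_def mdot_eq)

lemma integral_gauss_1: "(\<integral>w. gauss 1 w \<partial>lborel) = complex_of_real (2 * pi)"
  using integral_plane_wave_gauss(2)[of 1 0] by (simp add: plane_wave_def mdot_eq gauss_def)

lemma integrable_plane_wave_schwartz_gauss:
  assumes g: "schwartz g" and l: "l \<noteq> 0"
  shows "integrable (lborel \<Otimes>\<^sub>M lborel) (\<lambda>(p, y). plane_wave (- p) y * g y * (plane_wave p x * gauss l p))"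
proof -
  define \<Phi> where "\<Phi> p y = plane_wave (- p) y * g y * (plane_wave p x * gauss l p)" for p y
  obtain C where C: "\<And>p. norm (g p) \<le> C * weight p"
    using schwartz_le_weight[OF g] by blast
  have "integrable lborel (\<lambda>z. \<Phi> (fst z) (snd z))"
  proof (rule Bochner_Integration.integrable_bound)
    show "integrable lborel (\<lambda>z. gauss l (fst z) * complex_of_real (C * weight (snd z)))"
      by (intro integrable_tensor_lborel integrable_gauss[OF l] integrable_of_real
          integrable_mult_right integrable_weight)
    show "(\<lambda>z. \<Phi> (fst z) (snd z)) \<in> borel_measurable lborel"
      unfolding measurable_lborel2 \<Phi>_def
      by (intro borel_measurable_continuous_onI continuous_intros
          continuous_on_compose2[OF schwartz_continuous[OF g]] continuous_on_compose2[OF continuous_on_gauss])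
        auto
    show "AE z in lborel. norm (\<Phi> (fst z) (snd z)) \<le> norm (gauss l (fst z) * complex_of_real (C * weight (snd z)))"
    proof (rule AE_I2)
      fix z :: "(real \<times> real) \<times> real \<times> real"
      have "norm (\<Phi> (fst z) (snd z)) = norm (gauss l (fst z)) * norm (g (snd z))"
        by (simp add: \<Phi>_def norm_mult)
      also have "\<dots> \<le> norm (gauss l (fst z)) * (C * weight (snd z))"
        by (intro mult_left_mono C) simp
      also have "\<dots> \<le> norm (gauss l (fst z) * complex_of_real (C * weight (snd z)))"
        by (auto simp: norm_mult abs_mult[symmetric] intro!: mult_left_mono)
      finally show "norm (\<Phi> (fst z) (snd z)) \<le> norm (gauss l (fst z) * complex_of_real (C * weight (snd z)))" .
    qed
  qed
  then show ?thesis
    by (simp add: \<Phi>_def lborel_prod case_prod_beta')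
qed

text \<open>Fourier inversion for the Gaussian-damped integral: after Fubini, the damped plane waves
  integrate to a Gaussian approximate identity.\<close>

lemma integral_FT_plane_wave_gauss:
  assumes g: "schwartz g" and l: "l \<noteq> 0"
  shows "(\<integral>p. FT g p * plane_wave p x * gauss l p \<partial>lborel) = (\<integral>w. g (x + l *\<^sub>R w) * gauss 1 w \<partial>lborel)"
proof -
  define \<Phi> where "\<Phi> p y = plane_wave (- p) y * g y * (plane_wave p x * gauss l p)" for p y
  note fubini = lborel_pair.Fubini_integral[OF integrable_plane_wave_schwartz_gauss[OF g l, of x, folded \<Phi>_def]]
  define c where "c = complex_of_real (1 / (2 * pi))"
  define G where "G y = g y * gauss (1 / l) (x - y)" for y
  have "FT g p * plane_wave p x * gauss l p = c * (\<integral>y. \<Phi> p y \<partial>lborel)" for p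
  proof -
    have "(\<integral>y. \<Phi> p y \<partial>lborel) = (\<integral>y. plane_wave (- p) y * g y \<partial>lborel) * (plane_wave p x * gauss l p)"
      unfolding \<Phi>_def by (rule integral_mult_left_zero)
    then show ?thesis
      by (simp add: FT_eq_plane_wave c_def mult.assoc)
  qed
  then have "(\<integral>p. FT g p * plane_wave p x * gauss l p \<partial>lborel) = c * (\<integral>y. (\<integral>p. \<Phi> p y \<partial>lborel) \<partial>lborel)"
    by (simp add: fubini)
  also have "(\<lambda>y. \<integral>p. \<Phi> p y \<partial>lborel) = (\<lambda>y. complex_of_real (2 * pi / l\<^sup>2) * G y)"
  proof
    fix y
    have "\<Phi> p y = g y * (plane_wave p (x - y) * gauss l p)" for p
      by (simp add: \<Phi>_def plane_wave_uminus_left plane_wave_add[symmetric] mult_ac)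
    then have "(\<integral>p. \<Phi> p y \<partial>lborel) = g y * (\<integral>p. plane_wave p (x - y) * gauss l p \<partial>lborel)"
      by simp
    then show "(\<integral>p. \<Phi> p y \<partial>lborel) = complex_of_real (2 * pi / l\<^sup>2) * G y"
      unfolding integral_plane_wave_gauss(2)[OF l] G_def by (simp only: mult_ac)
  qed
  also have "(\<integral>y. complex_of_real (2 * pi / l\<^sup>2) * G y \<partial>lborel)
      = complex_of_real (2 * pi / l\<^sup>2) * (l\<^sup>2 *\<^sub>R (\<integral>w. G (x + l *\<^sub>R w) \<partial>lborel))"
  proof -
    have "G \<in> borel_measurable borel"
      unfolding G_def
      by (intro borel_measurable_continuous_onI continuous_intros schwartz_continuous[OF g]
          continuous_on_compose2[OF continuous_on_gauss]) auto
    then show ?thesis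
      by (simp add: integral_lborel_affine[OF l, of G x] power2_eq_square scaleR_conv_of_real)
  qed
  also have "(\<lambda>w. G (x + l *\<^sub>R w)) = (\<lambda>w. g (x + l *\<^sub>R w) * gauss 1 w)"
    using l by (simp add: G_def gauss_def power_mult_distrib power_divide)
  finally show ?thesis
    using l by (simp add: c_def scaleR_conv_of_real)
qed

theorem fourier_inversion:
  assumes g: "schwartz g"
  shows "complex_of_real (1 / (2 * pi)) * (\<integral>p. FT g p * plane_wave p x \<partial>lborel) = g x"
proof -
  define l where "l n = 1 / real (Suc n)" for n
  have l: "l n \<noteq> 0" for n unfolding l_def by simp
  have l_lim: "l \<longlonglongrightarrow> 0"
    unfolding l_def by (rule LIMSEQ_inverse_real_of_nat[unfolded inverse_eq_divide])
  obtain C where C: "\<And>k. norm (FT g k) \<le> C * weight k"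
    using FT_le_weight[OF g] by blast
  obtain B where B: "\<And>p. norm (g p) \<le> B"
    using schwartz_bounded[OF g] by blast
  have [measurable]: "gauss l' \<in> borel_measurable borel" "(\<lambda>p. plane_wave p x) \<in> borel_measurable borel" for l'
    by (auto intro!: borel_measurable_continuous_onI continuous_intros continuous_on_gauss)
  have "(\<lambda>n. \<integral>p. FT g p * plane_wave p x * gauss (l n) p \<partial>lborel) \<longlonglongrightarrow> (\<integral>p. FT g p * plane_wave p x \<partial>lborel)"
  proof (rule integral_dominated_convergence[where w="\<lambda>p. C * weight p"])
    show "AE p in lborel. (\<lambda>n. FT g p * plane_wave p x * gauss (l n) p) \<longlonglongrightarrow> FT g p * plane_wave p x"
      using l_lim by (intro AE_I2) (auto simp: gauss_def intro!: tendsto_eq_intros)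
    show "AE p in lborel. norm (FT g p * plane_wave p x * gauss (l n) p) \<le> C * weight p" for n
      by (intro AE_I2 order_trans[OF _ C]) (simp add: norm_mult mult_left_le norm_gauss_le_1)
  qed (use g in \<open>auto intro: integrable_mult_right integrable_weight\<close>)
  moreover have "(\<lambda>n. \<integral>w. g (x + l n *\<^sub>R w) * gauss 1 w \<partial>lborel) \<longlonglongrightarrow> (\<integral>w. g x * gauss 1 w \<partial>lborel)"
  proof (rule integral_dominated_convergence[where w="\<lambda>w. B * norm (gauss 1 w)"])
    show "AE w in lborel. (\<lambda>n. g (x + l n *\<^sub>R w) * gauss 1 w) \<longlonglongrightarrow> g x * gauss 1 w"
      using l_lim schwartz_differentiable[OF g, THEN differentiable_imp_continuous_within]
      by (intro AE_I2 tendsto_mult_right isCont_tendsto_compose[where g=g])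
        (auto simp: zero_prod_def intro!: tendsto_eq_intros)
    show "AE w in lborel. norm (g (x + l n *\<^sub>R w) * gauss 1 w) \<le> B * norm (gauss 1 w)" for n
      by (intro AE_I2) (simp add: norm_mult mult_right_mono B)
  qed (use g integrable_gauss[of 1] in \<open>auto intro: integrable_mult_right integrable_norm\<close>)
  ultimately have "(\<integral>p. FT g p * plane_wave p x \<partial>lborel) = (\<integral>w. g x * gauss 1 w \<partial>lborel)"
    using integral_FT_plane_wave_gauss[OF g l] LIMSEQ_unique by simp
  then show ?thesis
    by (simp add: integral_gauss_1)
qed

section \<open>The operators and the star product\<close>

lemma has_derivative_Ex: "(Ex E \<nu> has_derivative Ex E \<nu>) (at p)"
proof -
  have "Ex E \<nu> = (\<lambda>q. E * eps \<nu> 0 * fst q + E * eps \<nu> 1 * snd q)"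
    by (auto simp: Ex_def coord_def numeral_2_eq_2)
  then show ?thesis
    by (simp add: has_derivative_add has_derivative_mult_right has_derivative_fst has_derivative_snd)
qed

lemma pd_Dop:
  assumes f: "schwartz f"
  shows "pd \<mu> (Dop E \<nu> f) p = 1 / complex_of_real (sqrt 2) * (- \<i> * pd \<mu> (pd \<nu> f) p
      + complex_of_real (Ex E \<nu> (basis_vec \<mu>)) * f p + complex_of_real (Ex E \<nu> p) * pd \<mu> f p)"
proof -
  obtain U where U: "(pd \<nu> f has_derivative U) (at p)"
    using schwartz_differentiable[OF schwartz_pd[OF f]] unfolding differentiable_def by blast
  obtain V where V: "(f has_derivative V) (at p)"
    using schwartz_differentiable[OF f] unfolding differentiable_def by blast
  have "(Dop E \<nu> f has_derivative (\<lambda>h. 1 / complex_of_real (sqrt 2) * (- \<i> * U h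
      + (complex_of_real (Ex E \<nu> p) * V h + complex_of_real (Ex E \<nu> h) * f p)))) (at p)"
    unfolding Dop_def[abs_def]
    by (intro has_derivative_mult_right has_derivative_add has_derivative_mult U V
        has_derivative_of_real has_derivative_Ex)
  from pd_eq_derivative[OF this, of \<mu>] pd_eq_derivative[OF U, of \<mu>] pd_eq_derivative[OF V, of \<mu>]
  show ?thesis by (simp add: algebra_simps)
qed

lemma Dop_Dop:
  assumes f: "schwartz f"
  shows "Dop E \<mu> (Dop E \<mu> f) x = (- pd \<mu> (pd \<mu> f) x
      - 2 * \<i> * complex_of_real (Ex E \<mu> x) * pd \<mu> f x + complex_of_real ((Ex E \<mu> x)\<^sup>2) * f x) / 2"
proof -
  define s where "s = 1 / complex_of_real (sqrt 2)"
  define a where "a = complex_of_real (Ex E \<mu> x)"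
  have s2: "s * s = 1 / 2"
    by (simp add: s_def flip: of_real_mult)
  have "Dop E \<mu> (Dop E \<mu> f) x
      = s * (- \<i> * (s * (- \<i> * pd \<mu> (pd \<mu> f) x + a * pd \<mu> f x)) + a * (s * (- \<i> * pd \<mu> f x + a * f x)))"
    unfolding Dop_def[of E \<mu> "Dop E \<mu> f"] pd_Dop[OF f] Ex_basis_vec_self
    by (simp add: Dop_def s_def a_def)
  also have "\<dots> = s * s * (- pd \<mu> (pd \<mu> f) x - 2 * \<i> * a * pd \<mu> f x + a\<^sup>2 * f x)"
    by (simp add: algebra_simps power2_eq_square)
  finally show ?thesis
    unfolding s2 a_def by simp
qed

lemma Dsq_eq:
  assumes f: "schwartz f"
  shows "Dsq E f x = (pd 1 (pd 1 f) x - pd 0 (pd 0 f) x) / 2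
      - \<i> * complex_of_real E * (complex_of_real (snd x) * pd 0 f x + complex_of_real (fst x) * pd 1 f x)
      + complex_of_real (E\<^sup>2 * ((snd x)\<^sup>2 - (fst x)\<^sup>2) / 2) * f x"
proof -
  have "Dsq E f x = Dop E 0 (Dop E 0 f) x - Dop E 1 (Dop E 1 f) x"
    by (simp add: Dsq_def eta_def numeral_2_eq_2)
  also have "\<dots> = (pd 1 (pd 1 f) x - pd 0 (pd 0 f) x) / 2
      - \<i> * complex_of_real E * (complex_of_real (snd x) * pd 0 f x + complex_of_real (fst x) * pd 1 f x)
      + complex_of_real (E\<^sup>2 * ((snd x)\<^sup>2 - (fst x)\<^sup>2) / 2) * f x"
    unfolding Dop_Dop[OF f] Ex_0 Ex_1 by (simp add: field_simps power2_eq_square)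
  finally show ?thesis .
qed

lemma E2_Hpoly_shift_FT:
  assumes f: "schwartz f" and E: "E \<noteq> 0" and \<theta>: "\<theta> = 2 / E"
  shows "complex_of_real (E\<^sup>2) * Hpoly (x + shiftv \<theta> p) * FT f p
    = (FT (pd 1 (pd 1 f)) p - FT (pd 0 (pd 0 f)) p) / 2
      - \<i> * complex_of_real E * (complex_of_real (snd x) * FT (pd 0 f) p + complex_of_real (fst x) * FT (pd 1 f) p)
      + complex_of_real (E\<^sup>2 * ((snd x)\<^sup>2 - (fst x)\<^sup>2) / 2) * FT f p"
proof -
  have "E\<^sup>2 * (((snd (x + shiftv \<theta> p))\<^sup>2 - (fst (x + shiftv \<theta> p))\<^sup>2) / 2)
      = ((fst p)\<^sup>2 - (snd p)\<^sup>2) / 2 + E * (snd x * fst p - fst x * snd p)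
        + E\<^sup>2 * ((snd x)\<^sup>2 - (fst x)\<^sup>2) / 2"
    using E unfolding \<theta> shiftv_eq by (simp add: field_simps power2_eq_square)
  then have H: "complex_of_real (E\<^sup>2) * Hpoly (x + shiftv \<theta> p) = complex_of_real (((fst p)\<^sup>2 - (snd p)\<^sup>2) / 2
      + E * (snd x * fst p - fst x * snd p) + E\<^sup>2 * ((snd x)\<^sup>2 - (fst x)\<^sup>2) / 2)"
    unfolding Hpoly_def of_real_mult[symmetric] by (rule arg_cong)
  show ?thesis
    unfolding H FT_pd_pd[OF f] FT_pd[OF f] mdot_basis_vec by (simp add: algebra_simps power2_eq_square)
qed

lemma E2_star_poly_left_Hpoly:
  assumes f: "schwartz f" and E: "E \<noteq> 0" and \<theta>: "\<theta> = 2 / E"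
  shows "complex_of_real (E\<^sup>2) * star_poly_left \<theta> Hpoly f x = (pd 1 (pd 1 f) x - pd 0 (pd 0 f) x) / 2
      - \<i> * complex_of_real E * (complex_of_real (snd x) * pd 0 f x + complex_of_real (fst x) * pd 1 f x)
      + complex_of_real (E\<^sup>2 * ((snd x)\<^sup>2 - (fst x)\<^sup>2) / 2) * f x"
proof -
  define D where "D v = (v (pd 1 (pd 1 f)) - v (pd 0 (pd 0 f))) / 2
      - \<i> * complex_of_real E * (complex_of_real (snd x) * v (pd 0 f) + complex_of_real (fst x) * v (pd 1 f))
      + complex_of_real (E\<^sup>2 * ((snd x)\<^sup>2 - (fst x)\<^sup>2) / 2) * v f"
    for v :: "(real \<times> real \<Rightarrow> complex) \<Rightarrow> complex"
  define c where "c = complex_of_real (1 / (2 * pi))"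
  define T where "T h p = c * plane_wave p x * FT h p" for h p
  have s: "schwartz (pd 0 f)" "schwartz (pd 1 f)" "schwartz (pd 0 (pd 0 f))" "schwartz (pd 1 (pd 1 f))"
    using f by (auto intro: schwartz_pd)
  have T: "has_bochner_integral lborel (T h) (h x)" if "schwartz h" for h
  proof -
    have "has_bochner_integral lborel (\<lambda>p. FT h p * plane_wave p x) (\<integral>p. FT h p * plane_wave p x \<partial>lborel)"
      by (rule has_bochner_integral_integrable[OF integrable_FT_plane_wave[OF that]])
    from has_bochner_integral_mult_right[of c, OF this]
    show ?thesis
      unfolding c_def fourier_inversion[OF that] T_def[abs_def] by (simp only: mult_ac)
  qed
  have "has_bochner_integral lborel (\<lambda>p. D (\<lambda>h. T h p)) (D (\<lambda>h. h x))"
    unfolding D_def using T[OF f] T[OF s(1)] T[OF s(2)] T[OF s(3)] T[OF s(4)]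
    by (intro has_bochner_integral_add has_bochner_integral_diff has_bochner_integral_divide_zero
        has_bochner_integral_mult_right)
  moreover have "D (\<lambda>h. T h p) = complex_of_real (E\<^sup>2) *
      (c * (FT f p * Hpoly (x + shiftv \<theta> p) * exp (\<i> * complex_of_real (mdot p x))))" for p
  proof -
    have "D (\<lambda>h. a * v h) = a * D v" for a v
      unfolding D_def by (simp add: algebra_simps)
    then have "D (\<lambda>h. T h p) = c * plane_wave p x * D (\<lambda>h. FT h p)"
      unfolding T_def .
    also have "D (\<lambda>h. FT h p) = complex_of_real (E\<^sup>2) * Hpoly (x + shiftv \<theta> p) * FT f p"
      unfolding D_def E2_Hpoly_shift_FT[OF f E \<theta>] ..
    finally show ?thesis
      by (simp add: plane_wave_def mult_ac)
  qed
  ultimately have "has_bochner_integral lborel (\<lambda>p. complex_of_real (E\<^sup>2) *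
      (c * (FT f p * Hpoly (x + shiftv \<theta> p) * exp (\<i> * complex_of_real (mdot p x))))) (D (\<lambda>h. h x))"
    by simp
  from has_bochner_integral_integral_eq[OF this]
  show ?thesis
    by (simp add: star_poly_left_def c_def D_def)
qed

lemma Dtsq_eq_Dsq_uminus: "Dtsq E f = Dsq (- E) f"
proof -
  have "Dtop E \<mu> g = Dop (- E) \<mu> g" for \<mu> g
    by (rule ext) (simp add: Dtop_def Dop_def Ex_def sum_negf)
  then show ?thesis
    unfolding Dtsq_def[abs_def] Dsq_def[abs_def] by simp
qed

lemma star_poly_right_eq_left: "star_poly_right \<theta> f P = star_poly_left (- \<theta>) P f"
proof -
  have "x - shiftv \<theta> k = x + shiftv (- \<theta>) k" for x k
    by (simp add: shiftv_eq)
  then show ?thesis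
    unfolding star_poly_right_def[abs_def] star_poly_left_def[abs_def] by (simp only:)
qed

theorem lemma1:
  fixes E \<theta> :: real and f :: "real \<times> real \<Rightarrow> complex"
  assumes "E \<noteq> 0" and "\<theta> = 2 / E" and "schwartz f"
  shows "Dsq E f = (\<lambda>x. complex_of_real (E ^ 2) * star_poly_left \<theta> Hpoly f x)
       \<and> Dtsq E f = (\<lambda>x. complex_of_real (E ^ 2) * star_poly_right \<theta> f Hpoly x)"
proof
  have left: "Dsq E' f = (\<lambda>x. complex_of_real (E' ^ 2) * star_poly_left (2 / E') Hpoly f x)"
    if "E' \<noteq> 0" for E'
    using Dsq_eq[OF assms(3)] E2_star_poly_left_Hpoly[OF assms(3) that refl] by auto
  show "Dsq E f = (\<lambda>x. complex_of_real (E ^ 2) * star_poly_left \<theta> Hpoly f x)"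
    using left[OF assms(1)] assms(2) by simp
  show "Dtsq E f = (\<lambda>x. complex_of_real (E ^ 2) * star_poly_right \<theta> f Hpoly x)"
    using left[of "- E"] assms(1,2) by (simp add: Dtsq_eq_Dsq_uminus star_poly_right_eq_left)
qed

end
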